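(* Let $\mathcal{H}_A$ be a Hilbert space of finite dimension $d_A$, $\rho_A$ a quantum state on $\mathcal{H}_A$, and $\gamma>0$. Then for every positive integer $n$, $$\overline{S}_{\overline{\epsilon}}(A^n)_{\rho^{\otimes n}}\le n\big(S(\rho_A)+\gamma\big),\qquad \underline{S}_{\underline{\epsilon}}(A^n)_{\rho^{\otimes n}}\ge n\big(S(\rho_A)-\gamma\big),$$ where $\overline{\epsilon}=(1+n)^{d_A}2^{-n\overline{D}(\rho_A,\gamma)}$ and $\underline{\epsilon}=(1+n)^{d_A}2^{-n\underline{D}(\rho_A,\gamma)}$, with $$\overline{D}(\rho,\gamma)=\inf_{\sigma:\ \rho\sigma=\sigma\rho,\ S(\sigma)+D(\sigma\|\rho)>S(\rho)+\gamma}D(\sigma\|\rho),\qquad \underline{D}(\rho,\gamma)=\inf_{\sigma:\ \rho\sigma=\sigma\rho,\ S(\sigma)+D(\sigma\|\rho)<S(\rho)-\gamma}D(\sigma\|\rho),$$ the infima being over normalized states $\sigma$ on $\mathcal{H}_A$.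
   Context: $S(\rho)=-\mathrm{Tr}\rho\log_2\rho$ is the von Neumann entropy and $D(\sigma\|\rho)=\mathrm{Tr}[\sigma(\log_2\sigma-\log_2\rho)]$ the relative entropy. For a Hermitian $Y=\sum_i\lambda_iE_i$, $\{Y\ge0\}=\sum_{i:\lambda_i\ge0}E_i$, and $\{\rho\ge c\}$ means $\{\rho-c\mathbb{I}\ge0\}$ (similarly for $\le$). For a state $\rho$ of a system $A$ and $\epsilon\ge0$, the information spectrum sup- and inf-entropies are $$\overline{S}_\epsilon(A)_\rho=\inf\{\lambda:\mathrm{Tr}[\{\rho\ge2^{-\lambda}\}\rho]\ge1-\epsilon\},\qquad \underline{S}_\epsilon(A)_\rho=\sup\{\lambda:\mathrm{Tr}[\{\rho\le2^{-\lambda}\}\rho]\ge1-\epsilon\}.$$ Here $A^n$ denotes $n$ copies of $A$ in the state $\rho_A^{\otimes n}$. *)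

theory Defs
  imports "Jordan_Normal_Form.Matrix" "HOL-Library.Extended_Real"
begin

definition mtrace :: "complex mat \<Rightarrow> complex" where
  "mtrace A = (\<Sum>i<dim_row A. A $$ (i,i))"

definition adj :: "complex mat \<Rightarrow> complex mat" where
  "adj A = mat (dim_col A) (dim_row A) (\<lambda>(i,j). cnj (A $$ (j,i)))"

definition hermitian_mat :: "complex mat \<Rightarrow> bool" where
  "hermitian_mat A \<longleftrightarrow> A \<in> carrier_mat (dim_row A) (dim_row A) \<and> adj A = A"

definition unitary_mat :: "complex mat \<Rightarrow> bool" where
  "unitary_mat U \<longleftrightarrow> U \<in> carrier_mat (dim_row U) (dim_row U) \<and> adj U * U = 1\<^sub>m (dim_row U)"

definition psd_mat :: "complex mat \<Rightarrow> bool" where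
  "psd_mat A \<longleftrightarrow> hermitian_mat A \<and>
     (\<forall>v \<in> carrier_vec (dim_row A). 0 \<le> Re (\<Sum>i<dim_row A. cnj (v $ i) * (A *\<^sub>v v) $ i))"

definition density_op :: "nat \<Rightarrow> complex mat \<Rightarrow> bool" where
  "density_op d \<rho> \<longleftrightarrow> \<rho> \<in> carrier_mat d d \<and> psd_mat \<rho> \<and> mtrace \<rho> = 1"

definition real_diag :: "nat \<Rightarrow> (nat \<Rightarrow> real) \<Rightarrow> complex mat" where
  "real_diag n lam = mat n n (\<lambda>(i,j). if i = j then complex_of_real (lam i) else 0)"

definition spectral_decomp :: "complex mat \<Rightarrow> complex mat \<Rightarrow> (nat \<Rightarrow> real) \<Rightarrow> bool" where
  "spectral_decomp A U lam \<longleftrightarrow> unitary_mat U \<and> dim_row U = dim_row A \<and>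
     A = U * real_diag (dim_row A) lam * adj U"

definition mat_fun :: "(real \<Rightarrow> real) \<Rightarrow> complex mat \<Rightarrow> complex mat" where
  "mat_fun f A = (let (U, lam) = (SOME (U, lam). spectral_decomp A U lam)
                  in U * real_diag (dim_row A) (f \<circ> lam) * adj U)"

definition proj_nonneg :: "complex mat \<Rightarrow> complex mat" where
  "proj_nonneg Y = mat_fun (\<lambda>x. if 0 \<le> x then 1 else 0) Y"

definition proj_nonpos :: "complex mat \<Rightarrow> complex mat" where
  "proj_nonpos Y = mat_fun (\<lambda>x. if x \<le> 0 then 1 else 0) Y"

definition proj_ge :: "complex mat \<Rightarrow> real \<Rightarrow> complex mat" where
  "proj_ge \<rho> c = proj_nonneg (\<rho> - complex_of_real c \<cdot>\<^sub>m 1\<^sub>m (dim_row \<rho>))"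

definition proj_le :: "complex mat \<Rightarrow> real \<Rightarrow> complex mat" where
  "proj_le \<rho> c = proj_nonpos (\<rho> - complex_of_real c \<cdot>\<^sub>m 1\<^sub>m (dim_row \<rho>))"

text \<open>Base-2 matrix logarithm; note log 2 0 = 0 in Isabelle, realizing the 0 log 0 = 0 convention.\<close>
definition log2_mat :: "complex mat \<Rightarrow> complex mat" where
  "log2_mat A = mat_fun (log 2) A"

definition vn_entropy :: "complex mat \<Rightarrow> real" where
  "vn_entropy \<rho> = - Re (mtrace (\<rho> * log2_mat \<rho>))"

text \<open>Relative entropy, +infinity unless supp sigma is contained in supp rho.\<close>
definition rel_entropy :: "complex mat \<Rightarrow> complex mat \<Rightarrow> ereal" where
  "rel_entropy \<sigma> \<rho> =
     (if (\<forall>v \<in> carrier_vec (dim_row \<rho>). \<rho> *\<^sub>v v = 0\<^sub>v (dim_row \<rho>) \<longrightarrow> \<sigma> *\<^sub>v v = 0\<^sub>v (dim_row \<rho>))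
      then ereal (Re (mtrace (\<sigma> * (log2_mat \<sigma> - log2_mat \<rho>))))
      else \<infinity>)"

definition kron :: "complex mat \<Rightarrow> complex mat \<Rightarrow> complex mat" where
  "kron A B = mat (dim_row A * dim_row B) (dim_col A * dim_col B)
     (\<lambda>(i,j). A $$ (i div dim_row B, j div dim_col B) * B $$ (i mod dim_row B, j mod dim_col B))"

fun tensor_pow :: "complex mat \<Rightarrow> nat \<Rightarrow> complex mat" where
  "tensor_pow \<rho> 0 = 1\<^sub>m 1"
| "tensor_pow \<rho> (Suc n) = kron (tensor_pow \<rho> n) \<rho>"

section \<open>Information spectrum entropies (extended reals, so empty/unbounded cases are handled)\<close>

definition sup_spec_entropy :: "real \<Rightarrow> complex mat \<Rightarrow> ereal" where
  "sup_spec_entropy \<epsilon> \<rho> =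
     Inf (ereal ` {l. Re (mtrace (proj_ge \<rho> (2 powr (-l)) * \<rho>)) \<ge> 1 - \<epsilon>})"

definition inf_spec_entropy :: "real \<Rightarrow> complex mat \<Rightarrow> ereal" where
  "inf_spec_entropy \<epsilon> \<rho> =
     Sup (ereal ` {l. Re (mtrace (proj_le \<rho> (2 powr (-l)) * \<rho>)) \<ge> 1 - \<epsilon>})"

definition D_bar :: "complex mat \<Rightarrow> real \<Rightarrow> ereal" where
  "D_bar \<rho> \<gamma> = Inf {rel_entropy \<sigma> \<rho> | \<sigma>. density_op (dim_row \<rho>) \<sigma> \<and> \<rho> * \<sigma> = \<sigma> * \<rho> \<and>
        ereal (vn_entropy \<sigma>) + rel_entropy \<sigma> \<rho> > ereal (vn_entropy \<rho> + \<gamma>)}"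

definition D_under :: "complex mat \<Rightarrow> real \<Rightarrow> ereal" where
  "D_under \<rho> \<gamma> = Inf {rel_entropy \<sigma> \<rho> | \<sigma>. density_op (dim_row \<rho>) \<sigma> \<and> \<rho> * \<sigma> = \<sigma> * \<rho> \<and>
        ereal (vn_entropy \<sigma>) + rel_entropy \<sigma> \<rho> < ereal (vn_entropy \<rho> - \<gamma>)}"

text \<open>(1+n)^d * 2^(-n D), with 2^(-infinity) = 0 (the -infinity case cannot occur since D >= 0).\<close>
definition eps_of :: "nat \<Rightarrow> nat \<Rightarrow> ereal \<Rightarrow> real" where
  "eps_of d n D = (1 + real n) ^ d *
     (case ereal (real n) * D of ereal r \<Rightarrow> 2 powr (- r) | _ \<Rightarrow> 0)"

end

theory Submission
  imports Defs "Jordan_Normal_Form.Schur_Decomposition" "Jordan_Normal_Form.Spectral_Radius"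
begin

text \<open>Diagonalise \<open>\<rho> = U diag(p) U\<^sup>*\<close>. Then \<open>\<rho>\<^sup>\<otimes>\<^sup>n\<close> is diagonal in the product basis with eigenvalues
  \<open>p\<^sup>n(x) = p(x\<^sub>1) \<cdots> p(x\<^sub>n)\<close>, so the traces in both information spectrum entropies are sums of \<open>p\<^sup>n(x)\<close>
  over the strings \<open>x\<close> with \<open>p\<^sup>n(x)\<close> on one side of \<open>2^(-n(S(\<rho>) \<plusminus> \<gamma>))\<close>, and the claim becomes a
  classical large-deviation bound, proved by the method of types. A string of type (empirical
  distribution) \<open>t\<close> has \<open>p\<^sup>n(x) = 2^(-n(H(t) + D(t\<parallel>p)))\<close> and its type class has at most \<open>2^(nH(t))\<close>
  elements, so each type class has mass at most \<open>2^(-nD(t\<parallel>p))\<close>, and there are at most \<open>(n + 1)\<^sup>d\<close>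
  types. The state \<open>\<sigma> = U diag(t) U\<^sup>*\<close> commutes with \<open>\<rho>\<close>, has \<open>S(\<sigma>) + D(\<sigma>\<parallel>\<rho>) = H(t) + D(t\<parallel>p)\<close> and
  \<open>D(\<sigma>\<parallel>\<rho>) = D(t\<parallel>p)\<close>; for an atypical string it competes in the infimum defining the exponent, so
  \<open>D(t\<parallel>p)\<close> is at least that exponent.\<close>

lemma index_mult_mat_sum:
  assumes "A \<in> carrier_mat n m" "B \<in> carrier_mat m p" "i < n" "j < p"
  shows "(A * B) $$ (i,j) = (\<Sum>k<m. A $$ (i,k) * B $$ (k,j))"
  using assms by (auto simp: scalar_prod_def lessThan_atLeast0 intro!: sum.cong)

lemma index_mult_mat_vec_sum:
  "A \<in> carrier_mat n m \<Longrightarrow> v \<in> carrier_vec m \<Longrightarrow> i < n \<Longrightarrow>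
   (A *\<^sub>v v) $ i = (\<Sum>k<m. A $$ (i,k) * v $ k)"
  by (auto simp: scalar_prod_def lessThan_atLeast0 intro!: sum.cong)

lemma cscalar_prod_sum:
  "w \<in> carrier_vec n \<Longrightarrow> u \<in> carrier_vec n \<Longrightarrow> w \<bullet>c u = (\<Sum>k<n. w $ k * cnj (u $ k))"
  by (auto simp: scalar_prod_def lessThan_atLeast0 intro!: sum.cong)

lemma cscalar_prod_self_real:
  fixes w :: "complex vec"
  shows "w \<bullet>c w = complex_of_real (Re (w \<bullet>c w))" "Re (w \<bullet>c w) \<ge> 0"
  using conjugate_square_ge_0_vec[of w] by (auto simp: less_eq_complex_def complex_eq_iff)

lemma mtrace_minus:
  "A \<in> carrier_mat n n \<Longrightarrow> B \<in> carrier_mat n n \<Longrightarrow> mtrace (A - B) = mtrace A - mtrace B"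
  by (auto simp: mtrace_def sum_subtractf)

lemma adj_index [simp]: "i < dim_col A \<Longrightarrow> j < dim_row A \<Longrightarrow> adj A $$ (i,j) = cnj (A $$ (j,i))"
  unfolding adj_def by auto

lemma adj_dim [simp]: "dim_row (adj A) = dim_col A" "dim_col (adj A) = dim_row A"
  unfolding adj_def by auto

lemma adj_carrier [simp]: "A \<in> carrier_mat n m \<Longrightarrow> adj A \<in> carrier_mat m n"
  by auto

lemma adj_adj [simp]: "adj (adj A) = A"
  by (rule eq_matI) auto

lemma adj_mult:
  assumes "A \<in> carrier_mat n m" "B \<in> carrier_mat m p"
  shows "adj (A * B) = adj B * adj A"
proof (rule eq_matI)
  fix i j assume "i < dim_row (adj B * adj A)" "j < dim_col (adj B * adj A)"
  hence i: "i < p" and j: "j < n" using assms by auto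
  have "adj (A * B) $$ (i,j) = cnj ((A * B) $$ (j,i))" using i j assms by simp
  also have "\<dots> = (\<Sum>k<m. cnj (A $$ (j,k)) * cnj (B $$ (k,i)))"
    by (subst index_mult_mat_sum[OF assms j i]) simp
  also have "\<dots> = (adj B * adj A) $$ (i,j)"
    by (subst index_mult_mat_sum[of _ p m _ n])
      (use assms i j in \<open>auto simp: mult.commute intro!: sum.cong\<close>)
  finally show "adj (A * B) $$ (i,j) = (adj B * adj A) $$ (i,j)" .
qed (use assms in auto)

lemma mult_mat_assoc_dims [simp]:
  fixes A B C :: "complex mat"
  assumes "dim_col A = dim_row B" "dim_col B = dim_row C"
  shows "(A * B) * C = A * (B * C)"
  using assms by (intro assoc_mult_mat[OF carrier_mat_triv]) (auto intro: carrier_matI)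

section \<open>Unitary matrices and the spectral theorem\<close>

definition unitary :: "nat \<Rightarrow> complex mat \<Rightarrow> bool" where
  "unitary n U \<longleftrightarrow> U \<in> carrier_mat n n \<and> adj U * U = 1\<^sub>m n"

lemma unitaryD:
  assumes "unitary n U"
  shows "U \<in> carrier_mat n n" "adj U * U = 1\<^sub>m n" "U * adj U = 1\<^sub>m n"
    "dim_row U = n" "dim_col U = n"
  using assms mat_mult_left_right_inverse[of "adj U" n U] unfolding unitary_def by auto

lemma unitary_cancel [simp]:
  assumes "unitary n U" "dim_row M = n"
  shows "adj U * (U * M) = M" "U * (adj U * M) = M"
  using assms unitaryD[OF assms(1)] by (simp_all flip: mult_mat_assoc_dims)

lemma unitary_mult:
  assumes "unitary n U" "unitary n V"
  shows "unitary n (U * V)"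
  using unitaryD[OF assms(1)] unitaryD[OF assms(2)]
  by (simp add: unitary_def adj_mult[of _ n n _ n])

lemma unitary_col_orthonormal:
  assumes "unitary n U" "k < n" "l < n"
  shows "(\<Sum>i<n. cnj (U $$ (i,k)) * U $$ (i,l)) = (if k = l then 1 else 0)"
proof -
  have "(\<Sum>i<n. cnj (U $$ (i,k)) * U $$ (i,l)) = (adj U * U) $$ (k,l)"
    using assms unitaryD[OF assms(1)] by (subst index_mult_mat_sum[of _ n n _ n]) auto
  thus ?thesis using assms unitaryD[OF assms(1)] by simp
qed

lemma unitary_row_orthonormal:
  assumes "unitary n U" "k < n" "l < n"
  shows "(\<Sum>i<n. U $$ (k,i) * cnj (U $$ (l,i))) = (if k = l then 1 else 0)"
proof -
  have "(\<Sum>i<n. U $$ (k,i) * cnj (U $$ (l,i))) = (U * adj U) $$ (k,l)"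
    using assms unitaryD[OF assms(1)] by (subst index_mult_mat_sum[of _ n n _ n]) auto
  thus ?thesis using assms unitaryD[OF assms(1)] by simp
qed

lemma unitary_normalize_corthogonal:
  assumes ws: "set ws \<subseteq> carrier_vec n" "corthogonal ws" "length ws = n"
  shows "unitary n (mat n n (\<lambda>(k,i). complex_of_real (1 / sqrt (Re (ws ! i \<bullet>c ws ! i))) * ws ! i $ k))"
    (is "unitary n ?W")
proof -
  define c where "c i = complex_of_real (1 / sqrt (Re (ws ! i \<bullet>c ws ! i)))" for i
  have wsi: "i < n \<Longrightarrow> ws ! i \<in> carrier_vec n" for i using ws by auto
  have pos: "Re (ws ! i \<bullet>c ws ! i) > 0" if i: "i < n" for i
  proof -
    have "ws ! i \<bullet>c ws ! i \<noteq> 0" using ws(2) i ws(3) by (auto simp: corthogonal_def)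
    thus ?thesis using cscalar_prod_self_real[of "ws ! i"] by (metis less_eq_real_def of_real_0)
  qed
  have "adj ?W * ?W = 1\<^sub>m n"
  proof (rule eq_matI)
    fix i j assume "i < dim_row (1\<^sub>m n)" "j < dim_col (1\<^sub>m n)"
    hence i: "i < n" and j: "j < n" by auto
    have "(adj ?W * ?W) $$ (i,j) = (\<Sum>k<n. cnj (c i * ws ! i $ k) * (c j * ws ! j $ k))"
      by (subst index_mult_mat_sum[of _ n n _ n]) (use i j in \<open>auto simp: c_def\<close>)
    also have "\<dots> = cnj (c i) * c j * (ws ! j \<bullet>c ws ! i)"
      by (subst cscalar_prod_sum[OF wsi[OF j] wsi[OF i]])
        (auto simp: sum_distrib_left intro!: sum.cong)
    also have "\<dots> = 1\<^sub>m n $$ (i,j)"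
    proof (cases "i = j")
      case True
      have "cnj (c i) * c i * complex_of_real (Re (ws ! i \<bullet>c ws ! i)) = 1"
        using pos[OF i] unfolding c_def by (simp flip: of_real_mult)
      then show ?thesis using True i cscalar_prod_self_real(1)[of "ws ! i"] by simp
    next
      case False
      then show ?thesis using ws(2) i j ws(3) by (auto simp: corthogonal_def)
    qed
    finally show "(adj ?W * ?W) $$ (i,j) = 1\<^sub>m n $$ (i,j)" .
  qed auto
  thus ?thesis by (simp add: unitary_def)
qed

text \<open>Gram-Schmidt applied to a basis completion of \<open>v\<close> keeps \<open>v\<close> as its first vector.\<close>
lemma unitary_completion:
  fixes v :: "complex vec"
  assumes v: "v \<in> carrier_vec n" and v1: "v \<bullet>c v = 1"
  obtains W where "unitary n W" "\<forall>k<n. W $$ (k,0) = v $ k"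
proof -
  have v0: "v \<noteq> 0\<^sub>v n" using v1 v by auto
  hence n: "n > 0" using v by (cases n) auto
  interpret cof_vec_space n "TYPE(complex)" .
  define b where "b = basis_completion v"
  from basis_completion[OF v v0, folded b_def]
  have dist_b: "distinct b" and indep: "\<not> lin_dep (set b)" and b: "set b \<subseteq> carrier_vec n"
    and hdb: "hd b = v" and len_b: "length b = n" by auto
  from hdb len_b n obtain vs where bv: "b = v # vs" by (cases b, auto)
  define ws where "ws = gram_schmidt n b"
  from gram_schmidt_result[OF b dist_b indep refl, folded ws_def]
  have ws: "set ws \<subseteq> carrier_vec n" "corthogonal ws" "length ws = n"
    by (auto simp: len_b)
  from gram_schmidt_hd[OF v, of vs, folded bv] have "hd ws = v" unfolding ws_def .
  hence "ws ! 0 = v" using n ws(3) by (cases ws) auto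
  thus thesis using unitary_normalize_corthogonal[OF ws] v1 n by (intro that) auto
qed

lemma hermitian_eigenvalue_real:
  fixes A :: "complex mat"
  assumes A: "A \<in> carrier_mat n n" and h: "adj A = A"
    and u: "u \<in> carrier_vec n" "u \<bullet>c u = 1" and Au: "A *\<^sub>v u = k \<cdot>\<^sub>v u"
  shows "k = complex_of_real (Re k)"
proof -
  define q where "q = (\<Sum>i<n. cnj (u $ i) * (A *\<^sub>v u) $ i)"
  have "q = k * (\<Sum>i<n. u $ i * cnj (u $ i))"
    unfolding q_def Au using u by (auto simp: sum_distrib_left intro!: sum.cong)
  also have "(\<Sum>i<n. u $ i * cnj (u $ i)) = 1" using u cscalar_prod_sum[OF u(1) u(1)] by simp
  finally have qk: "q = k" by simp
  have Ae: "i < n \<Longrightarrow> l < n \<Longrightarrow> cnj (A $$ (i,l)) = A $$ (l,i)" for i l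
    using arg_cong[OF h, of "\<lambda>M. M $$ (l,i)"] A by auto
  have mvu: "i < n \<Longrightarrow> (A *\<^sub>v u) $ i = (\<Sum>l<n. A $$ (i,l) * u $ l)" for i
    using index_mult_mat_vec_sum[OF A u(1)] by simp
  have "cnj q = (\<Sum>i<n. \<Sum>l<n. u $ i * cnj (A $$ (i,l)) * cnj (u $ l))"
    unfolding q_def using u A
    by (simp add: mvu sum_distrib_left algebra_simps del: index_mult_mat_vec)
  also have "\<dots> = (\<Sum>i<n. \<Sum>l<n. cnj (u $ l) * A $$ (l,i) * u $ i)"
    by (intro sum.cong refl) (simp add: Ae)
  also have "\<dots> = q"
    unfolding q_def using u A
    by (subst sum.swap) (simp add: mvu sum_distrib_left algebra_simps del: index_mult_mat_vec)
  finally have "cnj k = k" using qk by simp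
  thus ?thesis by (metis Reals_cnj_iff complex_is_Real_iff of_real_Re)
qed

lemma hermitian_unit_eigenvector:
  fixes A :: "complex mat"
  assumes A: "A \<in> carrier_mat n n" and h: "adj A = A" and n: "n > 0"
  obtains u e where "u \<in> carrier_vec n" "u \<bullet>c u = 1" "A *\<^sub>v u = complex_of_real e \<cdot>\<^sub>v u"
proof -
  from spectrum_non_empty[OF A n] obtain k where "k \<in> spectrum A" by auto
  then obtain v where v: "v \<in> carrier_vec n" "v \<noteq> 0\<^sub>v n" and Av: "A *\<^sub>v v = k \<cdot>\<^sub>v v"
    using A unfolding spectrum_def eigenvalue_def eigenvector_def by auto
  define r where "r = Re (v \<bullet>c v)"
  have rpos: "r > 0"
    using conjugate_square_greater_0_vec[OF v(1)] v(2) cscalar_prod_self_real[of v]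
    unfolding r_def by (metis less_complex_def zero_complex.sel(1))
  define u where "u = complex_of_real (1 / sqrt r) \<cdot>\<^sub>v v"
  have u: "u \<in> carrier_vec n" using v unfolding u_def by auto
  have "u \<bullet>c u = complex_of_real (1 / r) * (v \<bullet>c v)"
    using v u rpos by (simp add: cscalar_prod_sum[of _ n] u_def sum_distrib_left algebra_simps
        flip: of_real_mult)
  also have "\<dots> = 1"
    using rpos cscalar_prod_self_real(1)[of v] unfolding r_def[symmetric] by (simp flip: of_real_mult)
  finally have u1: "u \<bullet>c u = 1" .
  have Au: "A *\<^sub>v u = k \<cdot>\<^sub>v u"
    unfolding u_def using mult_mat_vec[OF A v(1)] Av by (auto simp: smult_smult_assoc mult.commute)
  show thesis using hermitian_eigenvalue_real[OF A h u u1 Au] u u1 Au by (intro that) auto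
qed

definition diag_block :: "nat \<Rightarrow> complex \<Rightarrow> complex mat \<Rightarrow> complex mat" where
  "diag_block m c M = mat (Suc m) (Suc m) (\<lambda>(i,j). if i = 0 \<and> j = 0 then c
     else if i = 0 \<or> j = 0 then 0 else M $$ (i - 1, j - 1))"

lemma diag_block_carrier [simp]: "diag_block m c M \<in> carrier_mat (Suc m) (Suc m)"
  by (auto simp: diag_block_def)

lemma diag_block_mult:
  assumes "M \<in> carrier_mat m m" "N \<in> carrier_mat m m"
  shows "diag_block m a M * diag_block m b N = diag_block m (a * b) (M * N)"
proof (rule eq_matI)
  fix i j assume "i < dim_row (diag_block m (a * b) (M * N))" "j < dim_col (diag_block m (a * b) (M * N))"
  hence i: "i < Suc m" and j: "j < Suc m" by (auto simp: diag_block_def)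
  show "(diag_block m a M * diag_block m b N) $$ (i,j) = diag_block m (a * b) (M * N) $$ (i,j)"
    unfolding index_mult_mat_sum[OF diag_block_carrier diag_block_carrier i j] sum.lessThan_Suc_shift
    using i j assms
    by (cases i; cases j) (auto simp: diag_block_def index_mult_mat_sum[OF assms] simp del: index_mult_mat)
qed (auto simp: diag_block_def)

lemma diag_block_adj: "M \<in> carrier_mat m m \<Longrightarrow> adj (diag_block m a M) = diag_block m (cnj a) (adj M)"
  by (rule eq_matI) (auto simp: diag_block_def)

lemma diag_block_one: "diag_block m 1 (1\<^sub>m m) = 1\<^sub>m (Suc m)"
  by (rule eq_matI) (auto simp: diag_block_def)

lemma diag_block_real_diag:
  "diag_block m (complex_of_real e) (real_diag m lam) =
   real_diag (Suc m) (\<lambda>i. if i = 0 then e else lam (i - 1))"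
  by (rule eq_matI) (auto simp: diag_block_def real_diag_def)

lemma real_diag_carrier [simp]: "real_diag n lam \<in> carrier_mat n n"
  by (auto simp: real_diag_def)

lemma real_diag_index [simp]:
  "i < n \<Longrightarrow> j < n \<Longrightarrow> real_diag n a $$ (i,j) = (if i = j then complex_of_real (a i) else 0)"
  "dim_row (real_diag n a) = n" "dim_col (real_diag n a) = n"
  by (auto simp: real_diag_def)

definition unitary_diag :: "nat \<Rightarrow> complex mat \<Rightarrow> (nat \<Rightarrow> real) \<Rightarrow> complex mat" where
  "unitary_diag n U a = U * real_diag n a * adj U"

text \<open>The first column of \<open>adj W * A * W\<close> is \<open>e\<close> times the first unit vector, and by hermiticity so is its
  first row.\<close>
lemma hermitian_deflation:
  fixes A :: "complex mat"
  assumes A: "A \<in> carrier_mat (Suc m) (Suc m)" and h: "adj A = A" and W: "unitary (Suc m) W"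
    and u: "u \<in> carrier_vec (Suc m)" and W0: "\<forall>k<Suc m. W $$ (k,0) = u $ k"
    and Au: "A *\<^sub>v u = complex_of_real e \<cdot>\<^sub>v u"
  obtains A' where "A' \<in> carrier_mat m m" "adj A' = A'" "adj W * (A * W) = diag_block m (complex_of_real e) A'"
proof -
  let ?n = "Suc m"
  note Wc = unitaryD[OF W]
  define B where "B = adj W * (A * W)"
  have B: "B \<in> carrier_mat ?n ?n" using Wc A by (auto simp: B_def)
  have hB: "adj B = B" unfolding B_def using Wc A h
    by (simp add: adj_mult[of _ ?n ?n _ ?n] assoc_mult_mat[of _ ?n ?n _ ?n _ ?n])
  have Bc0: "B $$ (i,0) = (if i = 0 then complex_of_real e else 0)" if i: "i < ?n" for i
  proof -
    have AW0: "(A * W) $$ (k,0) = complex_of_real e * u $ k" if k: "k < ?n" for k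
      using index_mult_mat_sum[OF A Wc(1) k, of 0] W0 index_mult_mat_vec_sum[OF A u k] Au k u
      by simp
    have "B $$ (i,0) = (\<Sum>k<?n. adj W $$ (i,k) * (A * W) $$ (k,0))"
      unfolding B_def by (rule index_mult_mat_sum[of _ ?n ?n _ ?n]) (use Wc A i in auto)
    also have "\<dots> = complex_of_real e * (\<Sum>k<?n. adj W $$ (i,k) * W $$ (k,0))"
      by (simp add: AW0 W0 sum_distrib_left algebra_simps)
    also have "(\<Sum>k<?n. adj W $$ (i,k) * W $$ (k,0)) = (adj W * W) $$ (i,0)"
      by (rule index_mult_mat_sum[symmetric, of _ ?n ?n _ ?n]) (use Wc i in auto)
    finally show ?thesis using Wc(2) i by simp
  qed
  have Br0: "B $$ (0,j) = (if j = 0 then complex_of_real e else 0)" if j: "j < ?n" for j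
    using arg_cong[OF hB, of "\<lambda>M. M $$ (0,j)"] B j Bc0[OF j] by (auto split: if_splits)
  define A' where "A' = mat m m (\<lambda>(i,j). B $$ (Suc i, Suc j))"
  have "adj A' = A'"
  proof (rule eq_matI)
    fix i j assume "i < dim_row A'" "j < dim_col A'"
    hence "i < m" "j < m" by (auto simp: A'_def)
    thus "adj A' $$ (i,j) = A' $$ (i,j)"
      using arg_cong[OF hB, of "\<lambda>M. M $$ (Suc i, Suc j)"] B by (simp add: A'_def)
  qed (auto simp: A'_def)
  moreover have "B = diag_block m (complex_of_real e) A'"
  proof (rule eq_matI)
    fix i j assume "i < dim_row (diag_block m (complex_of_real e) A')"
      "j < dim_col (diag_block m (complex_of_real e) A')"
    hence i: "i < ?n" and j: "j < ?n" by (auto simp: diag_block_def)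
    show "B $$ (i,j) = diag_block m (complex_of_real e) A' $$ (i,j)"
      using Bc0[OF i] Br0[OF j] i j by (cases i; cases j) (auto simp: diag_block_def A'_def)
  qed (use B in \<open>auto simp: diag_block_def\<close>)
  ultimately show thesis by (intro that[of A']) (auto simp: A'_def B_def)
qed

theorem hermitian_spectral_decomposition:
  fixes A :: "complex mat"
  assumes "A \<in> carrier_mat n n" "adj A = A"
  shows "\<exists>U lam. unitary n U \<and> A = unitary_diag n U lam"
  using assms
proof (induction n arbitrary: A)
  case 0
  show ?case
    by (rule exI[of _ "1\<^sub>m 0"], rule exI[of _ "\<lambda>_. 0"])
      (use 0 in \<open>auto intro!: eq_matI simp: unitary_def unitary_diag_def\<close>)
next
  case (Suc m A)
  note A = Suc.prems(1) and h = Suc.prems(2)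
  let ?n = "Suc m"
  obtain u e where u: "u \<in> carrier_vec ?n" "u \<bullet>c u = 1" and Au: "A *\<^sub>v u = complex_of_real e \<cdot>\<^sub>v u"
    using hermitian_unit_eigenvector[OF A h] by blast
  obtain W where W: "unitary ?n W" and W0: "\<forall>k<?n. W $$ (k,0) = u $ k"
    using unitary_completion[OF u] by blast
  obtain A' where A': "A' \<in> carrier_mat m m" "adj A' = A'"
    and B: "adj W * (A * W) = diag_block m (complex_of_real e) A'"
    using hermitian_deflation[OF A h W u(1) W0 Au] by blast
  obtain U' lam' where U': "unitary m U'" and A'_eq: "A' = unitary_diag m U' lam'"
    using Suc.IH[OF A'] by blast
  note Wc = unitaryD[OF W] and U'c = unitaryD[OF U']
  define V where "V = diag_block m 1 U'"
  define lam where "lam = (\<lambda>i. if i = 0 then e else lam' (i - 1))"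
  have V: "unitary ?n V"
    unfolding unitary_def V_def using U'c by (simp add: diag_block_adj diag_block_mult diag_block_one)
  have BV: "adj W * (A * W) = unitary_diag ?n V lam"
    unfolding B V_def lam_def diag_block_real_diag[symmetric] A'_eq unitary_diag_def using U'c
    by (simp add: diag_block_adj diag_block_mult)
  have "unitary_diag ?n (W * V) lam = W * (adj W * (A * W)) * adj W"
    unfolding BV unitary_diag_def using Wc unitaryD[OF V]
    by (simp add: adj_mult[of _ ?n ?n _ ?n] assoc_mult_mat[of _ ?n ?n _ ?n _ ?n])
  also have "\<dots> = (W * adj W) * A * (W * adj W)"
    using Wc(1) A by (simp add: assoc_mult_mat[of _ ?n ?n _ ?n _ ?n])
  also have "\<dots> = A" using Wc A by simp
  finally show ?case using unitary_mult[OF W V] by metis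
qed

lemma unitary_diag_dim [simp]:
  "dim_row (unitary_diag n U a) = dim_row U" "dim_col (unitary_diag n U a) = dim_row U"
  by (auto simp: unitary_diag_def)

lemma unitary_diag_carrier [simp]: "unitary n U \<Longrightarrow> unitary_diag n U a \<in> carrier_mat n n"
  unfolding unitary_diag_def unitary_def by auto

lemma real_diag_mult_left:
  "X \<in> carrier_mat n n \<Longrightarrow> i < n \<Longrightarrow> j < n \<Longrightarrow>
   (real_diag n a * X) $$ (i,j) = complex_of_real (a i) * X $$ (i,j)"
  by (simp add: index_mult_mat_sum[of _ n n _ n] if_distrib if_distribR sum.delta
      cong: if_cong del: index_mult_mat)

lemma real_diag_mult_right:
  "X \<in> carrier_mat n n \<Longrightarrow> i < n \<Longrightarrow> j < n \<Longrightarrow>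
   (X * real_diag n a) $$ (i,j) = X $$ (i,j) * complex_of_real (a j)"
  by (simp add: index_mult_mat_sum[of _ n n _ n] if_distrib if_distribR sum.delta'
      cong: if_cong del: index_mult_mat)

lemma real_diag_mult: "real_diag n a * real_diag n b = real_diag n (\<lambda>i. a i * b i)"
  by (rule eq_matI) (auto simp: real_diag_mult_left[OF real_diag_carrier] simp del: index_mult_mat simp add: index_mult_mat(2,3))

lemma unitary_diag_index:
  assumes "unitary n U" "i < n" "j < n"
  shows "unitary_diag n U a $$ (i,j) = (\<Sum>k<n. U $$ (i,k) * complex_of_real (a k) * cnj (U $$ (j,k)))"
proof -
  note U = unitaryD(1)[OF assms(1)]
  have "(U * real_diag n a) $$ (i,k) = U $$ (i,k) * complex_of_real (a k)" if "k < n" for k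
    using real_diag_mult_right[OF U assms(2) that] .
  thus ?thesis unfolding unitary_diag_def
    using index_mult_mat_sum[OF mult_carrier_mat[OF U real_diag_carrier] adj_carrier[OF U] assms(2,3)]
      U assms by simp
qed

lemma unitary_diag_mult:
  assumes "unitary n U"
  shows "unitary_diag n U a * unitary_diag n U b = unitary_diag n U (\<lambda>i. a i * b i)"
proof -
  note U = unitaryD(1,2)[OF assms]
  have "unitary_diag n U a * unitary_diag n U b = U * real_diag n a * (adj U * U) * real_diag n b * adj U"
    unfolding unitary_diag_def using U(1) by (simp add: assoc_mult_mat[of _ n n _ n _ n])
  also have "\<dots> = U * (real_diag n a * real_diag n b) * adj U"
    unfolding U(2) using U(1) by (simp add: assoc_mult_mat[of _ n n _ n _ n])
  finally show ?thesis unfolding real_diag_mult unitary_diag_def .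
qed

lemma unitary_diag_commute:
  "unitary n U \<Longrightarrow> unitary_diag n U a * unitary_diag n U b = unitary_diag n U b * unitary_diag n U a"
  by (simp add: unitary_diag_mult mult.commute)

lemma unitary_diag_minus:
  "unitary n U \<Longrightarrow> unitary_diag n U a - unitary_diag n U b = unitary_diag n U (\<lambda>i. a i - b i)"
  by (rule eq_matI)
    (auto simp: unitary_diag_index unitaryD sum_subtractf[symmetric] algebra_simps intro!: sum.cong)

lemma unitary_diag_adj: "unitary n U \<Longrightarrow> adj (unitary_diag n U a) = unitary_diag n U a"
  by (rule eq_matI) (auto simp: unitary_diag_index unitaryD mult.commute mult.left_commute)

lemma unitary_diag_const:
  assumes "unitary n U"
  shows "unitary_diag n U (\<lambda>_. c) = complex_of_real c \<cdot>\<^sub>m 1\<^sub>m n"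
proof (rule eq_matI)
  fix i j assume "i < dim_row (complex_of_real c \<cdot>\<^sub>m 1\<^sub>m n)" "j < dim_col (complex_of_real c \<cdot>\<^sub>m 1\<^sub>m n)"
  hence i: "i < n" and j: "j < n" by auto
  have "unitary_diag n U (\<lambda>_. c) $$ (i,j) = complex_of_real c * (\<Sum>k<n. U $$ (i,k) * cnj (U $$ (j,k)))"
    by (simp add: unitary_diag_index[OF assms i j] sum_distrib_left algebra_simps)
  thus "unitary_diag n U (\<lambda>_. c) $$ (i,j) = (complex_of_real c \<cdot>\<^sub>m 1\<^sub>m n) $$ (i,j)"
    using unitary_row_orthonormal[OF assms i j] i j by simp
qed (use assms in \<open>auto simp: unitaryD\<close>)

lemma mtrace_unitary_diag:
  assumes "unitary n U"
  shows "mtrace (unitary_diag n U a) = (\<Sum>i<n. complex_of_real (a i))"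
proof -
  have "mtrace (unitary_diag n U a) =
      (\<Sum>i<n. \<Sum>k<n. U $$ (i,k) * complex_of_real (a k) * cnj (U $$ (i,k)))"
    unfolding mtrace_def using assms by (simp add: unitary_diag_index unitaryD)
  also have "\<dots> = (\<Sum>k<n. complex_of_real (a k) * (\<Sum>i<n. cnj (U $$ (i,k)) * U $$ (i,k)))"
    by (subst sum.swap) (simp add: sum_distrib_left algebra_simps)
  also have "\<dots> = (\<Sum>k<n. complex_of_real (a k))"
    using unitary_col_orthonormal[OF assms] by simp
  finally show ?thesis .
qed

text \<open>If \<open>U diag(a) U\<^sup>* = V diag(b) V\<^sup>*\<close>, then \<open>X = V\<^sup>* U\<close> intertwines \<open>diag(a)\<close> and \<open>diag(b)\<close>, so
  \<open>X\<^sub>i\<^sub>j \<noteq> 0\<close> forces \<open>b i = a j\<close>, and \<open>X\<close> intertwines \<open>diag(f \<circ> a)\<close> and \<open>diag(f \<circ> b)\<close> as well.\<close>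
lemma unitary_diag_comp_unique:
  assumes U: "unitary n U" and V: "unitary n V" and eq: "unitary_diag n U a = unitary_diag n V b"
  shows "unitary_diag n U (f \<circ> a) = unitary_diag n V (f \<circ> b)"
proof -
  have Uc: "U \<in> carrier_mat n n" and Vc: "V \<in> carrier_mat n n" using U V unitaryD by auto
  define X where "X = adj V * U"
  have X: "X \<in> carrier_mat n n" using mult_carrier_mat[OF adj_carrier[OF Vc] Uc] by (simp add: X_def)
  have "adj V * unitary_diag n U a * U = X * real_diag n a"
    "adj V * unitary_diag n V b * U = real_diag n b * X"
    unfolding unitary_diag_def X_def using U V by (simp_all add: unitaryD)
  hence comm: "real_diag n b * X = X * real_diag n a" using eq by simp
  have commf: "real_diag n (f \<circ> b) * X = X * real_diag n (f \<circ> a)"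
  proof (rule eq_matI)
    fix i j assume "i < dim_row (X * real_diag n (f \<circ> a))" "j < dim_col (X * real_diag n (f \<circ> a))"
    hence i: "i < n" and j: "j < n" using X by auto
    have "complex_of_real (b i) * X $$ (i,j) = X $$ (i,j) * complex_of_real (a j)"
      using arg_cong[OF comm, of "\<lambda>M. M $$ (i,j)"]
        real_diag_mult_left[OF X i j] real_diag_mult_right[OF X i j] by simp
    hence "X $$ (i,j) = 0 \<or> b i = a j" by (auto simp: mult.commute)
    thus "(real_diag n (f \<circ> b) * X) $$ (i,j) = (X * real_diag n (f \<circ> a)) $$ (i,j)"
      using real_diag_mult_left[OF X i j] real_diag_mult_right[OF X i j] by auto
  qed (use X in auto)
  have "unitary_diag n U (f \<circ> a) = V * ((X * real_diag n (f \<circ> a)) * adj U)"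
    unfolding unitary_diag_def X_def using U V by (simp add: unitaryD)
  also have "\<dots> = V * ((real_diag n (f \<circ> b) * X) * adj U)" unfolding commf ..
  also have "\<dots> = unitary_diag n V (f \<circ> b)"
    unfolding unitary_diag_def X_def using U V by (simp add: unitaryD)
  finally show ?thesis .
qed

lemma mat_fun_unitary_diag:
  assumes U: "unitary n U"
  shows "mat_fun f (unitary_diag n U a) = unitary_diag n U (f \<circ> a)"
proof -
  let ?P = "\<lambda>(V, mu). spectral_decomp (unitary_diag n U a) V mu"
  have dr: "dim_row (unitary_diag n U a) = n" using unitaryD[OF U] by simp
  have "?P (U, a)"
    unfolding spectral_decomp_def unitary_mat_def unitary_diag_def using unitaryD[OF U] by auto
  hence "?P (SOME p. ?P p)" by (rule someI)
  moreover obtain V b where p: "(SOME p. ?P p) = (V, b)" by fastforce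
  ultimately have V: "unitary n V" and eq: "unitary_diag n U a = unitary_diag n V b"
    unfolding spectral_decomp_def unitary_mat_def unitary_def dr by (auto simp: unitary_diag_def)
  have "mat_fun f (unitary_diag n U a) = unitary_diag n V (f \<circ> b)"
    unfolding mat_fun_def p dr by (simp add: unitary_diag_def)
  also have "\<dots> = unitary_diag n U (f \<circ> a)" using unitary_diag_comp_unique[OF U V eq] by simp
  finally show ?thesis .
qed

definition quad_form :: "complex mat \<Rightarrow> complex vec \<Rightarrow> complex" where
  "quad_form A v = (\<Sum>i<dim_row A. cnj (v $ i) * (A *\<^sub>v v) $ i)"

lemma psd_mat_quad_form: "psd_mat A \<Longrightarrow> v \<in> carrier_vec (dim_row A) \<Longrightarrow> 0 \<le> Re (quad_form A v)"
  unfolding psd_mat_def quad_form_def by blast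

definition eigen_coord :: "nat \<Rightarrow> complex mat \<Rightarrow> complex vec \<Rightarrow> nat \<Rightarrow> complex" where
  "eigen_coord n U v k = (\<Sum>j<n. cnj (U $$ (j,k)) * v $ j)"

lemma unitary_diag_mult_vec:
  assumes U: "unitary n U" and v: "v \<in> carrier_vec n" and i: "i < n"
  shows "(unitary_diag n U a *\<^sub>v v) $ i = (\<Sum>k<n. U $$ (i,k) * complex_of_real (a k) * eigen_coord n U v k)"
proof -
  have "(unitary_diag n U a *\<^sub>v v) $ i =
      (\<Sum>j<n. (\<Sum>k<n. U $$ (i,k) * complex_of_real (a k) * cnj (U $$ (j,k))) * v $ j)"
    using index_mult_mat_vec_sum[OF unitary_diag_carrier[OF U] v i] U i
    by (simp add: unitary_diag_index del: index_mult_mat_vec)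
  also have "\<dots> = (\<Sum>k<n. U $$ (i,k) * complex_of_real (a k) * eigen_coord n U v k)"
    unfolding eigen_coord_def
    by (simp add: sum_distrib_left sum_distrib_right algebra_simps, rule sum.swap)
  finally show ?thesis .
qed

lemma eigen_coord_unitary_diag_mult_vec:
  assumes U: "unitary n U" and v: "v \<in> carrier_vec n" and m: "m < n"
  shows "eigen_coord n U (unitary_diag n U a *\<^sub>v v) m = complex_of_real (a m) * eigen_coord n U v m"
proof -
  have "eigen_coord n U (unitary_diag n U a *\<^sub>v v) m =
     (\<Sum>i<n. \<Sum>k<n. cnj (U $$ (i,m)) * U $$ (i,k) * (complex_of_real (a k) * eigen_coord n U v k))"
    unfolding eigen_coord_def using U v
    by (simp add: unitary_diag_mult_vec[unfolded eigen_coord_def] sum_distrib_left algebra_simps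
        del: index_mult_mat_vec)
  also have "\<dots> = (\<Sum>k<n. (\<Sum>i<n. cnj (U $$ (i,m)) * U $$ (i,k)) * (complex_of_real (a k) * eigen_coord n U v k))"
    by (subst sum.swap) (simp add: sum_distrib_right)
  also have "\<dots> = (\<Sum>k<n. if m = k then complex_of_real (a k) * eigen_coord n U v k else 0)"
    by (intro sum.cong refl) (simp add: unitary_col_orthonormal[OF U m])
  also have "\<dots> = complex_of_real (a m) * eigen_coord n U v m"
    using m by simp
  finally show ?thesis .
qed

lemma quad_form_unitary_diag:
  assumes U: "unitary n U" and v: "v \<in> carrier_vec n"
  shows "quad_form (unitary_diag n U a) v =
    (\<Sum>k<n. complex_of_real (a k) * (cnj (eigen_coord n U v k) * eigen_coord n U v k))"
proof -
  have "quad_form (unitary_diag n U a) v =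
      (\<Sum>i<n. \<Sum>k<n. cnj (v $ i) * (U $$ (i,k) * complex_of_real (a k) * eigen_coord n U v k))"
    unfolding quad_form_def using U v
    by (simp add: unitary_diag_mult_vec sum_distrib_left unitaryD del: index_mult_mat_vec)
  also have "\<dots> = (\<Sum>k<n. complex_of_real (a k) * (cnj (eigen_coord n U v k) * eigen_coord n U v k))"
    unfolding eigen_coord_def
    by (subst sum.swap) (simp add: sum_distrib_left sum_distrib_right algebra_simps)
  finally show ?thesis .
qed

lemma quad_form_unitary_diag_col:
  assumes U: "unitary n U" and m: "m < n"
  shows "quad_form (unitary_diag n U a) (col U m) = complex_of_real (a m)"
proof -
  note Uc = unitaryD[OF U]
  have ec: "eigen_coord n U (col U m) k = (if k = m then 1 else 0)" if k: "k < n" for k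
    unfolding eigen_coord_def using unitary_col_orthonormal[OF U k m] Uc m k by simp
  have "quad_form (unitary_diag n U a) (col U m) =
      (\<Sum>k<n. complex_of_real (a k) * (cnj (eigen_coord n U (col U m) k) * eigen_coord n U (col U m) k))"
    by (rule quad_form_unitary_diag[OF U]) (use Uc in auto)
  also have "\<dots> = (\<Sum>k<n. if k = m then complex_of_real (a k) else 0)"
    by (intro sum.cong refl) (simp add: ec)
  finally show ?thesis using m by simp
qed

lemma mtrace_mult_unitary_diag:
  assumes U: "unitary n U" and S: "S \<in> carrier_mat n n"
  shows "mtrace (S * unitary_diag n U l) = (\<Sum>k<n. complex_of_real (l k) * quad_form S (col U k))"
proof -
  note Uc = unitaryD[OF U]
  have "mtrace (S * unitary_diag n U l) =
      (\<Sum>i<n. \<Sum>j<n. S $$ (i,j) * (\<Sum>k<n. U $$ (j,k) * complex_of_real (l k) * cnj (U $$ (i,k))))"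
    unfolding mtrace_def using S U
    by (simp add: index_mult_mat_sum[OF S unitary_diag_carrier[OF U]] unitary_diag_index Uc
        del: index_mult_mat add: index_mult_mat(2,3))
  also have "\<dots> = (\<Sum>k<n. complex_of_real (l k) *
      (\<Sum>i<n. cnj (U $$ (i,k)) * (\<Sum>j<n. S $$ (i,j) * U $$ (j,k))))"
    by (simp add: sum_distrib_left sum_distrib_right algebra_simps, subst sum.swap,
        rule sum.cong, rule refl, rule sum.swap)
  also have "\<dots> = (\<Sum>k<n. complex_of_real (l k) * quad_form S (col U k))"
    unfolding quad_form_def using S Uc
    by (auto intro!: sum.cong simp: index_mult_mat_vec_sum[OF S] simp del: index_mult_mat_vec)
  finally show ?thesis .
qed

lemma density_op_spectral:
  assumes "density_op d \<rho>"
  obtains U p where "unitary d U" "\<rho> = unitary_diag d U p" "\<forall>i<d. p i \<ge> 0" "(\<Sum>i<d. p i) = 1"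
proof -
  have c: "\<rho> \<in> carrier_mat d d" and h: "adj \<rho> = \<rho>" and psd: "psd_mat \<rho>" and tr: "mtrace \<rho> = 1"
    using assms unfolding density_op_def psd_mat_def hermitian_mat_def by auto
  obtain U p where U: "unitary d U" and r: "\<rho> = unitary_diag d U p"
    using hermitian_spectral_decomposition[OF c h] by auto
  have "p i \<ge> 0" if i: "i < d" for i
  proof -
    have "0 \<le> Re (quad_form \<rho> (col U i))"
      using psd_mat_quad_form[OF psd] col_dim[of U i] unitaryD(4)[OF U] carrier_matD(1)[OF c] by simp
    thus ?thesis using quad_form_unitary_diag_col[OF U i, of p] r by simp
  qed
  moreover have "(\<Sum>i<d. p i) = 1"
    using tr mtrace_unitary_diag[OF U, of p] r by (simp flip: of_real_sum)
  ultimately show thesis using that[OF U r] by blast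
qed

lemma density_op_unitary_diag:
  assumes U: "unitary d U" and t: "\<forall>i<d. t i \<ge> 0" "(\<Sum>i<d. t i) = 1"
  shows "density_op d (unitary_diag d U t)"
proof -
  have "0 \<le> Re (quad_form (unitary_diag d U t) v)" if v: "v \<in> carrier_vec d" for v
  proof -
    have "Re (quad_form (unitary_diag d U t) v) =
        (\<Sum>k<d. t k * Re (cnj (eigen_coord d U v k) * eigen_coord d U v k))"
      using quad_form_unitary_diag[OF U v, of t] by (simp add: Re_sum)
    also have "\<dots> \<ge> 0" using t(1) by (intro sum_nonneg mult_nonneg_nonneg) auto
    finally show ?thesis .
  qed
  hence "psd_mat (unitary_diag d U t)"
    unfolding psd_mat_def hermitian_mat_def quad_form_def
    using unitary_diag_adj[OF U] unitary_diag_carrier[OF U] unitaryD[OF U] by auto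
  moreover have "mtrace (unitary_diag d U t) = 1"
    using mtrace_unitary_diag[OF U, of t] t(2) by (metis of_real_1 of_real_sum)
  ultimately show ?thesis unfolding density_op_def using U by simp
qed

lemma vn_entropy_unitary_diag:
  "unitary d U \<Longrightarrow> vn_entropy (unitary_diag d U t) = - (\<Sum>i<d. t i * log 2 (t i))"
  unfolding vn_entropy_def log2_mat_def
  by (simp add: mat_fun_unitary_diag unitary_diag_mult mtrace_unitary_diag Re_sum)

lemma rel_entropy_unitary_diag:
  assumes U: "unitary d U" and supp: "\<forall>i<d. t i \<noteq> 0 \<longrightarrow> p i \<noteq> 0"
  shows "rel_entropy (unitary_diag d U t) (unitary_diag d U p) =
    ereal (\<Sum>i<d. t i * (log 2 (t i) - log 2 (p i)))"
proof -
  note Uc = unitaryD[OF U]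
  have "unitary_diag d U t *\<^sub>v v = 0\<^sub>v d"
    if v: "v \<in> carrier_vec d" and z: "unitary_diag d U p *\<^sub>v v = 0\<^sub>v d" for v
  proof (rule eq_vecI)
    have "complex_of_real (p m) * eigen_coord d U v m = 0" if m: "m < d" for m
      using eigen_coord_unitary_diag_mult_vec[OF U v m, of p] z by (simp add: eigen_coord_def)
    hence "t m = 0 \<or> eigen_coord d U v m = 0" if "m < d" for m
      using that supp by (metis mult_eq_0_iff of_real_eq_0_iff)
    thus "(unitary_diag d U t *\<^sub>v v) $ i = 0\<^sub>v d $ i" if "i < dim_vec (0\<^sub>v d :: complex vec)" for i
      using that unitary_diag_mult_vec[OF U v, of i t] by (auto intro!: sum.neutral)
  qed (use Uc in simp)
  thus ?thesis unfolding rel_entropy_def using U Uc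
    by (simp add: log2_mat_def mat_fun_unitary_diag unitary_diag_minus unitary_diag_mult
        mtrace_unitary_diag Re_sum)
qed

lemma x_log2_x_ge: assumes "(s::real) \<ge> 0" shows "s * log 2 s \<ge> -2"
proof (cases "s = 0")
  case False
  hence s: "s > 0" using assms by simp
  have "ln (1/s) \<le> 1/s - 1" using ln_le_minus_one[of "1/s"] s by simp
  hence "s * ln s \<ge> -1" using s by (simp add: ln_div field_simps)
  moreover have "ln 2 \<ge> (1/2::real)" using ln_le_minus_one[of "1/2::real"] by (simp add: ln_div)
  ultimately have "(s * ln s) / ln 2 \<ge> -2"
    by (simp add: field_simps)
  thus ?thesis by (simp add: log_def)
qed simp

text \<open>A crude lower bound; it only serves to exclude the value \<open>-\<infinity>\<close> for the exponents.\<close>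
lemma rel_entropy_ge:
  assumes U: "unitary d U" and p: "\<forall>i<d. p i \<ge> 0" "(\<Sum>i<d. p i) = 1" and sig: "density_op d \<sigma>"
  shows "rel_entropy \<sigma> (unitary_diag d U p) \<ge> ereal (- 2 * real d)"
proof -
  obtain V s where V: "unitary d V" and sv: "\<sigma> = unitary_diag d V s" and s: "\<forall>i<d. s i \<ge> 0"
    using density_op_spectral[OF sig] by metis
  have sc: "\<sigma> \<in> carrier_mat d d" and psd: "psd_mat \<sigma>" using sig unfolding density_op_def by auto
  have L1: "log2_mat \<sigma> = unitary_diag d V (log 2 \<circ> s)"
    unfolding sv log2_mat_def by (rule mat_fun_unitary_diag[OF V])
  have L2: "log2_mat (unitary_diag d U p) = unitary_diag d U (log 2 \<circ> p)"
    unfolding log2_mat_def by (rule mat_fun_unitary_diag[OF U])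
  have "mtrace (\<sigma> * (log2_mat \<sigma> - log2_mat (unitary_diag d U p))) =
      mtrace (\<sigma> * log2_mat \<sigma>) - mtrace (\<sigma> * log2_mat (unitary_diag d U p))"
    unfolding L1 L2 mult_minus_distrib_mat[OF sc unitary_diag_carrier[OF V] unitary_diag_carrier[OF U]]
    by (rule mtrace_minus[OF mult_carrier_mat[OF sc unitary_diag_carrier[OF V]]
        mult_carrier_mat[OF sc unitary_diag_carrier[OF U]]])
  moreover have "Re (mtrace (\<sigma> * log2_mat \<sigma>)) = (\<Sum>i<d. s i * log 2 (s i))"
    unfolding L1 unfolding sv using V by (simp add: unitary_diag_mult mtrace_unitary_diag Re_sum)
  moreover have "(\<Sum>i<d. s i * log 2 (s i)) \<ge> (\<Sum>i<d. -2)"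
    using s x_log2_x_ge by (intro sum_mono) auto
  moreover have "Re (mtrace (\<sigma> * log2_mat (unitary_diag d U p))) =
      (\<Sum>k<d. log 2 (p k) * Re (quad_form \<sigma> (col U k)))"
    unfolding L2 using mtrace_mult_unitary_diag[OF U sc, of "log 2 \<circ> p"] by (simp add: Re_sum)
  moreover have "(\<Sum>k<d. log 2 (p k) * Re (quad_form \<sigma> (col U k))) \<le> 0"
  proof (intro sum_nonpos mult_nonpos_nonneg)
    fix k assume k: "k \<in> {..<d}"
    hence "p k \<le> 1" using member_le_sum[of k "{..<d}" p] p by simp
    thus "log 2 (p k) \<le> 0" using p k by (cases "p k = 0") (auto simp: log_def[of 2 0])
    show "0 \<le> Re (quad_form \<sigma> (col U k))"
      using psd_mat_quad_form[OF psd] col_dim[of U k] unitaryD(4)[OF U] carrier_matD(1)[OF sc] by simp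
  qed
  ultimately show ?thesis unfolding rel_entropy_def by simp
qed

section \<open>Kronecker products and tensor powers\<close>

lemma sum_lessThan_mult_div_mod:
  "(\<Sum>k<a * b. f (k div b) (k mod b)) = (\<Sum>i<a. \<Sum>j<(b::nat). (f i j :: 'a :: comm_monoid_add))"
proof -
  have "i * b + j < a * b" if "i < a" "j < b" for i j
  proof -
    have "i * b + j < Suc i * b" using that by simp
    also have "\<dots> \<le> a * b" using that by (intro mult_le_mono1) simp
    finally show ?thesis .
  qed
  hence "(\<Sum>k<a * b. f (k div b) (k mod b)) = (\<Sum>(i,j)\<in>{..<a} \<times> {..<b}. f i j)"
    by (intro sum.reindex_bij_witness[where i = "\<lambda>(i,j). i * b + j" and j = "\<lambda>k. (k div b, k mod b)"])
      (auto simp: less_mult_imp_div_less intro: mod_less_divisor[OF gr0I])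
  thus ?thesis by (simp add: sum.cartesian_product)
qed

lemma mod_less_of_less_mult: "i < a * (b::nat) \<Longrightarrow> i mod b < b"
  by (cases "b = 0") auto

lemma div_mod_eq_iff: "(i div b = j div b \<and> i mod b = j mod b) \<longleftrightarrow> i = (j::nat)"
  by (metis div_mult_mod_eq)

lemma kron_dim [simp]:
  "dim_row (kron A B) = dim_row A * dim_row B" "dim_col (kron A B) = dim_col A * dim_col B"
  by (auto simp: kron_def)

lemma kron_index [simp]:
  "i < dim_row A * dim_row B \<Longrightarrow> j < dim_col A * dim_col B \<Longrightarrow>
   kron A B $$ (i,j) = A $$ (i div dim_row B, j div dim_col B) * B $$ (i mod dim_row B, j mod dim_col B)"
  by (auto simp: kron_def)

lemma kron_mult:
  assumes A: "A \<in> carrier_mat a1 a2" and B: "B \<in> carrier_mat b1 b2"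
    and C: "C \<in> carrier_mat a2 a3" and D: "D \<in> carrier_mat b2 b3"
  shows "kron A B * kron C D = kron (A * C) (B * D)"
proof (rule eq_matI)
  fix i j assume "i < dim_row (kron (A * C) (B * D))" "j < dim_col (kron (A * C) (B * D))"
  hence i: "i < a1 * b1" and j: "j < a3 * b3" using A B C D by auto
  have "(kron A B * kron C D) $$ (i,j) = (\<Sum>k<a2*b2. kron A B $$ (i,k) * kron C D $$ (k,j))"
    by (rule index_mult_mat_sum[OF _ _ i j]) (use A B C D in auto)
  also have "\<dots> = (\<Sum>k<a2*b2. (A $$ (i div b1, k div b2) * C $$ (k div b2, j div b3)) *
      (B $$ (i mod b1, k mod b2) * D $$ (k mod b2, j mod b3)))"
    using A B C D i j by (intro sum.cong refl) auto
  also have "\<dots> = (\<Sum>x<a2. A $$ (i div b1, x) * C $$ (x, j div b3)) *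
      (\<Sum>y<b2. B $$ (i mod b1, y) * D $$ (y, j mod b3))"
    by (simp add: sum_lessThan_mult_div_mod[where f = "\<lambda>x y. (A $$ (i div b1, x) * C $$ (x, j div b3)) *
      (B $$ (i mod b1, y) * D $$ (y, j mod b3))"] sum_product)
  also have "\<dots> = kron (A * C) (B * D) $$ (i,j)"
    using index_mult_mat_sum[OF A C less_mult_imp_div_less[OF i] less_mult_imp_div_less[OF j]]
      index_mult_mat_sum[OF B D mod_less_of_less_mult[OF i] mod_less_of_less_mult[OF j]] A B C D i j
    by simp
  finally show "(kron A B * kron C D) $$ (i,j) = kron (A * C) (B * D) $$ (i,j)" .
qed (use A B C D in auto)

lemma kron_adj: "adj (kron A B) = kron (adj A) (adj B)"
proof (rule eq_matI)
  fix i j assume "i < dim_row (kron (adj A) (adj B))" "j < dim_col (kron (adj A) (adj B))"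
  hence i: "i < dim_col A * dim_col B" and j: "j < dim_row A * dim_row B" by auto
  show "adj (kron A B) $$ (i,j) = kron (adj A) (adj B) $$ (i,j)"
    using i j less_mult_imp_div_less[OF i] less_mult_imp_div_less[OF j]
      mod_less_of_less_mult[OF i] mod_less_of_less_mult[OF j] by simp
qed auto

lemma kron_one: "kron (1\<^sub>m a) (1\<^sub>m b) = (1\<^sub>m (a * b) :: complex mat)"
  by (rule eq_matI) (auto simp: less_mult_imp_div_less mod_less_of_less_mult
      dest: div_mod_eq_iff[THEN iffD1, OF conjI])

lemma kron_real_diag:
  "kron (real_diag a x) (real_diag b y) = real_diag (a * b) (\<lambda>i. x (i div b) * y (i mod b))"
  by (rule eq_matI) (auto simp: less_mult_imp_div_less mod_less_of_less_mult
      dest: div_mod_eq_iff[THEN iffD1, OF conjI])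

lemma unitary_kron:
  assumes U: "unitary a U" and V: "unitary b V"
  shows "unitary (a * b) (kron U V)"
proof -
  note Uc = unitaryD[OF U] and Vc = unitaryD[OF V]
  have "adj (kron U V) * kron U V = kron (adj U * U) (adj V * V)"
    unfolding kron_adj by (rule kron_mult) (use Uc Vc in auto)
  thus ?thesis unfolding unitary_def using Uc Vc by (auto simp: kron_one)
qed

lemma unitary_diag_kron:
  assumes U: "unitary a U" and V: "unitary b V"
  shows "kron (unitary_diag a U x) (unitary_diag b V y) =
    unitary_diag (a * b) (kron U V) (\<lambda>i. x (i div b) * y (i mod b))"
proof -
  note Uc = unitaryD[OF U] and Vc = unitaryD[OF V]
  have "kron (unitary_diag a U x) (unitary_diag b V y) =
      kron (U * real_diag a x) (V * real_diag b y) * kron (adj U) (adj V)"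
    unfolding unitary_diag_def by (rule kron_mult[symmetric]) (use Uc Vc in auto)
  also have "kron (U * real_diag a x) (V * real_diag b y) = kron U V * kron (real_diag a x) (real_diag b y)"
    by (rule kron_mult[symmetric]) (use Uc Vc in auto)
  finally show ?thesis unfolding unitary_diag_def kron_real_diag kron_adj .
qed

text \<open>The product distribution \<open>p\<^sup>\<otimes>\<^sup>k\<close> on strings of length \<open>k\<close> over \<open>{..<d}\<close>; a string is encoded by the
  number \<open>x < d ^ k\<close> whose base-\<open>d\<close> digits are its letters, the last letter being \<open>x mod d\<close>.\<close>
fun iid_prob :: "nat \<Rightarrow> (nat \<Rightarrow> real) \<Rightarrow> nat \<Rightarrow> nat \<Rightarrow> real" where
  "iid_prob d p 0 = (\<lambda>_. 1)"
| "iid_prob d p (Suc k) = (\<lambda>x. iid_prob d p k (x div d) * p (x mod d))"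

lemma tensor_pow_unitary_diag:
  assumes U: "unitary d U" and rho: "\<rho> = unitary_diag d U p"
  shows "unitary (d ^ k) (tensor_pow U k) \<and>
    tensor_pow \<rho> k = unitary_diag (d ^ k) (tensor_pow U k) (iid_prob d p k)"
proof (induction k)
  case 0
  have "adj (1\<^sub>m 1) = (1\<^sub>m 1 :: complex mat)" by (rule eq_matI) auto
  hence u1: "unitary 1 (1\<^sub>m 1)" by (simp add: unitary_def)
  have "(1 :: complex) \<cdot>\<^sub>m 1\<^sub>m 1 = 1\<^sub>m 1" by (rule eq_matI) auto
  then show ?case using u1 unitary_diag_const[OF u1, of 1] by simp
next
  case (Suc k)
  then show ?case
    using unitary_kron[OF conjunct1[OF Suc] U] unitary_diag_kron[OF conjunct1[OF Suc] U] rho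
    by (simp add: mult.commute)
qed

section \<open>The method of types\<close>

lemma iid_prob_sum: "(\<Sum>x<d ^ k. iid_prob d p k x) = (\<Sum>i<d. p i) ^ k"
proof (induction k)
  case (Suc k)
  have "(\<Sum>x<d ^ Suc k. iid_prob d p (Suc k) x) = (\<Sum>x<d ^ k * d. iid_prob d p k (x div d) * p (x mod d))"
    by (simp add: mult.commute)
  also have "\<dots> = (\<Sum>a<d ^ k. \<Sum>b<d. iid_prob d p k a * p b)"
    by (rule sum_lessThan_mult_div_mod)
  also have "\<dots> = (\<Sum>a<d ^ k. iid_prob d p k a) * (\<Sum>b<d. p b)" by (simp add: sum_product)
  finally show ?case using Suc by simp
qed simp

lemma iid_prob_nonneg: "\<forall>i<d. p i \<ge> 0 \<Longrightarrow> d > 0 \<Longrightarrow> iid_prob d p k x \<ge> 0"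
  by (induction k arbitrary: x) auto

fun letter_count :: "nat \<Rightarrow> nat \<Rightarrow> nat \<Rightarrow> nat \<Rightarrow> nat" where
  "letter_count d 0 x i = 0"
| "letter_count d (Suc k) x i = letter_count d k (x div d) i + (if x mod d = i then 1 else 0)"

lemma letter_count_le: "letter_count d k x i \<le> k"
  by (induction k arbitrary: x) (auto intro: le_SucI)

lemma letter_count_sum: "d > 0 \<Longrightarrow> (\<Sum>i<d. letter_count d k x i) = k"
proof (induction k arbitrary: x)
  case (Suc k)
  have "(\<Sum>i<d. letter_count d (Suc k) x i) =
      (\<Sum>i<d. letter_count d k (x div d) i) + (\<Sum>i<d. if x mod d = i then 1 else 0)"
    by (simp add: sum.distrib)
  also have "(\<Sum>i<d. (if x mod d = i then 1 else 0 :: nat)) = 1" using Suc.prems by simp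
  finally show ?case using Suc by simp
qed simp

lemma iid_prob_eq_prod: "d > 0 \<Longrightarrow> iid_prob d p k x = (\<Prod>i<d. p i ^ letter_count d k x i)"
proof (induction k arbitrary: x)
  case (Suc k)
  have "(\<Prod>i<d. p i ^ letter_count d (Suc k) x i) =
      (\<Prod>i<d. p i ^ letter_count d k (x div d) i * p i ^ (if x mod d = i then 1 else 0))"
    by (simp add: power_add)
  also have "\<dots> = (\<Prod>i<d. p i ^ letter_count d k (x div d) i) * (\<Prod>i<d. p i ^ (if x mod d = i then 1 else 0))"
    by (rule prod.distrib)
  also have "(\<Prod>i<d. p i ^ (if x mod d = i then 1 else 0)) = (\<Prod>i<d. if x mod d = i then p i else 1)"
    by (intro prod.cong refl) auto
  also have "(\<Prod>i<d. if x mod d = i then p i else 1) = p (x mod d)" using Suc.prems by simp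
  finally show ?case using Suc by simp
qed simp

lemma iid_prob_pos_letter_pos:
  assumes d: "d > 0" and p: "\<forall>i<d. p i \<ge> 0" and pos: "iid_prob d p k x > 0" and i: "i < d"
    and c: "letter_count d k x i > 0"
  shows "p i > 0"
proof -
  have "p i ^ letter_count d k x i \<noteq> 0"
  proof
    assume "p i ^ letter_count d k x i = 0"
    hence "(\<Prod>i<d. p i ^ letter_count d k x i) = 0"
      using i by (intro prod_zero[OF finite_lessThan]) blast
    hence "iid_prob d p k x = 0" by (simp only: iid_prob_eq_prod[OF d])
    thus False using pos by simp
  qed
  hence "p i \<noteq> 0" using c by auto
  thus ?thesis using p i by (simp add: order.not_eq_order_implies_strict)
qed

text \<open>Restricting the letter counts to \<open>{..<d}\<close> makes types elements of a finite \<open>PiE\<close> set, which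
  bounds their number.\<close>
definition type_of :: "nat \<Rightarrow> nat \<Rightarrow> nat \<Rightarrow> nat \<Rightarrow> nat" where
  "type_of d k x = restrict (letter_count d k x) {..<d}"

lemma type_of_PiE: "type_of d k x \<in> PiE {..<d} (\<lambda>_. {..k})"
  unfolding type_of_def using letter_count_le by auto

lemma card_type_of_image: "card (type_of d k ` S) \<le> (k + 1) ^ d"
proof -
  have "card (type_of d k ` S) \<le> card (PiE {..<d} (\<lambda>_. {..k}))"
    using type_of_PiE by (intro card_mono finite_PiE) auto
  thus ?thesis by (simp add: card_PiE)
qed

lemma iid_prob_type_of_eq:
  assumes "d > 0" "type_of d k x = type_of d k y"
  shows "iid_prob d p k x = iid_prob d p k y"
proof -
  have "letter_count d k x i = letter_count d k y i" if "i < d" for i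
    using assms(2) that unfolding type_of_def by (metis lessThan_iff restrict_apply')
  thus ?thesis unfolding iid_prob_eq_prod[OF assms(1)] by (intro prod.cong refl) auto
qed

definition empirical_dist :: "nat \<Rightarrow> nat \<Rightarrow> nat \<Rightarrow> nat \<Rightarrow> real" where
  "empirical_dist d n x i = real (letter_count d n x i) / real n"

definition empirical_divergence :: "nat \<Rightarrow> nat \<Rightarrow> (nat \<Rightarrow> real) \<Rightarrow> nat \<Rightarrow> real" where
  "empirical_divergence d n p x =
    (\<Sum>i<d. empirical_dist d n x i * (log 2 (empirical_dist d n x i) - log 2 (p i)))"

lemma empirical_dist_nonneg: "empirical_dist d n x i \<ge> 0"
  by (simp add: empirical_dist_def)

lemma empirical_dist_sum: "d > 0 \<Longrightarrow> n > 0 \<Longrightarrow> (\<Sum>i<d. empirical_dist d n x i) = 1"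
  unfolding empirical_dist_def using letter_count_sum[of d n x]
  by (simp add: sum_divide_distrib[symmetric] flip: of_nat_sum)

lemma iid_prob_eq_powr:
  assumes d: "d > 0" and n: "n > 0" and p: "\<forall>i<d. p i \<ge> 0" and pos: "iid_prob d p n x > 0"
  shows "iid_prob d p n x = 2 powr (real n * (\<Sum>i<d. empirical_dist d n x i * log 2 (p i)))"
proof -
  let ?c = "letter_count d n x"
  have "p i ^ ?c i = 2 powr (real (?c i) * log 2 (p i))" if i: "i < d" for i
  proof (cases "?c i = 0")
    case False
    hence "p i > 0" using iid_prob_pos_letter_pos[OF d p pos i] by simp
    thus ?thesis by (simp add: powr_powr[symmetric] mult.commute[of _ "log 2 _"] powr_realpow)
  qed simp
  hence "iid_prob d p n x = (\<Prod>i<d. 2 powr (real (?c i) * log 2 (p i)))"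
    unfolding iid_prob_eq_prod[OF d] by (intro prod.cong refl) auto
  also have "\<dots> = 2 powr (\<Sum>i<d. real (?c i) * log 2 (p i))"
    by (rule powr_sum[symmetric]) simp
  also have "(\<Sum>i<d. real (?c i) * log 2 (p i)) = real n * (\<Sum>i<d. empirical_dist d n x i * log 2 (p i))"
    unfolding sum_distrib_left using n by (intro sum.cong refl) (simp add: empirical_dist_def)
  finally show ?thesis .
qed

lemma iid_prob_empirical_dist_pos:
  assumes d: "d > 0" and n: "n > 0"
  shows "iid_prob d (empirical_dist d n x) n x > 0"
proof -
  have "empirical_dist d n x i ^ letter_count d n x i > 0" for i
    using n by (cases "letter_count d n x i = 0") (simp_all add: empirical_dist_def)
  thus ?thesis unfolding iid_prob_eq_prod[OF d] by (simp add: prod_pos)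
qed

lemma iid_prob_eq_empirical:
  assumes d: "d > 0" and n: "n > 0" and p: "\<forall>i<d. p i \<ge> 0" and pos: "iid_prob d p n x > 0"
  shows "iid_prob d p n x =
    iid_prob d (empirical_dist d n x) n x * 2 powr (- real n * empirical_divergence d n p x)"
proof -
  have "\<forall>i<d. empirical_dist d n x i \<ge> 0" by (simp add: empirical_dist_nonneg)
  note t_powr = iid_prob_eq_powr[OF d n this iid_prob_empirical_dist_pos[OF d n]]
  show ?thesis
    unfolding iid_prob_eq_powr[OF d n p pos] t_powr empirical_divergence_def
    by (simp add: powr_add[symmetric] sum_subtractf algebra_simps)
qed

lemma iid_prob_type_class_le:
  assumes d: "d > 0" and n: "n > 0" and K: "K \<subseteq> {..<d ^ n}"
    and same_type: "\<forall>x\<in>K. type_of d n x = type_of d n x0"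
  shows "real (card K) * iid_prob d (empirical_dist d n x0) n x0 \<le> 1"
proof -
  let ?t = "empirical_dist d n x0"
  have "iid_prob d ?t n x = iid_prob d ?t n x0" if "x \<in> K" for x
    using same_type that by (intro iid_prob_type_of_eq[OF d]) auto
  hence "real (card K) * iid_prob d ?t n x0 = (\<Sum>x\<in>K. iid_prob d ?t n x)" by simp
  also have "\<dots> \<le> (\<Sum>x<d ^ n. iid_prob d ?t n x)"
    by (rule sum_mono2[OF finite_lessThan K]) (simp add: iid_prob_nonneg[OF _ d] empirical_dist_nonneg)
  also have "\<dots> = 1" using iid_prob_sum[of d ?t n] empirical_dist_sum[OF d n] by simp
  finally show ?thesis .
qed

text \<open>Method of types: each of the at most \<open>(n + 1)\<^sup>d\<close> type classes meeting \<open>S\<close> carries mass at most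
  \<open>2\<^sup>-\<^sup>n\<^sup>r\<close>.\<close>
lemma iid_prob_sum_le_types:
  assumes d: "d > 0" and n: "n > 0" and p: "\<forall>i<d. p i \<ge> 0" and S: "S \<subseteq> {..<d ^ n}"
    and far: "\<forall>x\<in>S. iid_prob d p n x > 0 \<longrightarrow> r \<le> empirical_divergence d n p x"
  shows "(\<Sum>x\<in>S. iid_prob d p n x) \<le> real ((n + 1) ^ d) * 2 powr (- real n * r)"
proof -
  have fS: "finite S" using S finite_subset by blast
  define C where "C = type_of d n ` S"
  have class_mass: "(\<Sum>x\<in>{x \<in> S. type_of d n x = c}. iid_prob d p n x) \<le> 2 powr (- real n * r)"
    if c: "c \<in> C" for c
  proof -
    obtain x0 where x0: "x0 \<in> S" "type_of d n x0 = c" using c unfolding C_def by auto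
    define K where "K = {x \<in> S. type_of d n x = c}"
    have K: "K \<subseteq> {..<d ^ n}" "\<forall>x\<in>K. type_of d n x = type_of d n x0" using S x0 by (auto simp: K_def)
    have "iid_prob d p n x = iid_prob d p n x0" if "x \<in> K" for x
      using K(2) that by (intro iid_prob_type_of_eq[OF d]) auto
    hence sum_K: "(\<Sum>x\<in>K. iid_prob d p n x) = real (card K) * iid_prob d p n x0" by simp
    show ?thesis
    proof (cases "iid_prob d p n x0 > 0")
      case False
      thus ?thesis using iid_prob_nonneg[OF p d, of n x0] unfolding K_def[symmetric] sum_K by simp
    next
      case True
      have "real (card K) * iid_prob d p n x0 = real (card K) *
          iid_prob d (empirical_dist d n x0) n x0 * 2 powr (- real n * empirical_divergence d n p x0)"
        using iid_prob_eq_empirical[OF d n p True] by simp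
      also have "\<dots> \<le> 1 * 2 powr (- real n * empirical_divergence d n p x0)"
        by (rule mult_right_mono[OF iid_prob_type_class_le[OF d n K]]) simp
      also have "\<dots> \<le> 2 powr (- real n * r)" using far x0 True n by simp
      finally show ?thesis unfolding K_def[symmetric] sum_K .
    qed
  qed
  have "(\<Sum>x\<in>S. iid_prob d p n x) = (\<Sum>c\<in>C. \<Sum>x\<in>{x \<in> S. type_of d n x = c}. iid_prob d p n x)"
    by (rule sum.group[symmetric, OF fS]) (simp_all add: C_def fS)
  also have "\<dots> \<le> real (card C) * 2 powr (- real n * r)" using sum_mono[OF class_mass] by simp
  also have "\<dots> \<le> real ((n + 1) ^ d) * 2 powr (- real n * r)"
    using card_type_of_image[of d n S] unfolding C_def by (intro mult_right_mono) (simp_all only: of_nat_le_iff powr_ge_zero)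
  finally show ?thesis .
qed

lemma iid_prob_sum_le_eps_of:
  assumes d: "d > 0" and n: "n > 0" and p: "\<forall>i<d. p i \<ge> 0" and S: "S \<subseteq> {..<d ^ n}"
    and D: "D \<noteq> -\<infinity>" and far: "\<forall>x\<in>S. iid_prob d p n x > 0 \<longrightarrow> D \<le> ereal (empirical_divergence d n p x)"
  shows "(\<Sum>x\<in>S. iid_prob d p n x) \<le> eps_of d n D"
proof (cases D)
  case (real r)
  have "(\<Sum>x\<in>S. iid_prob d p n x) \<le> real ((n + 1) ^ d) * 2 powr (- real n * r)"
    using far real by (intro iid_prob_sum_le_types[OF d n p S]) auto
  thus ?thesis unfolding eps_of_def real by (simp add: add.commute)
next
  case PInf
  have "iid_prob d p n x = 0" if "x \<in> S" for x
    using far PInf that iid_prob_nonneg[OF p d, of n x] by (auto simp: less_le_not_le)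
  moreover have "ereal (real n) * D = \<infinity>" using PInf n by simp
  ultimately show ?thesis unfolding eps_of_def by simp
qed (use D in simp)

lemma mtrace_indicator_tensor_pow:
  assumes U: "unitary d U" and rho: "\<rho> = unitary_diag d U p"
  shows "Re (mtrace (mat_fun (\<lambda>y. if P y then 1 else 0)
      (tensor_pow \<rho> n - complex_of_real c \<cdot>\<^sub>m 1\<^sub>m (dim_row (tensor_pow \<rho> n))) * tensor_pow \<rho> n)) =
    (\<Sum>x<d ^ n. if P (iid_prob d p n x - c) then iid_prob d p n x else 0)"
proof -
  define W where "W = tensor_pow U n"
  have W: "unitary (d ^ n) W" and T: "tensor_pow \<rho> n = unitary_diag (d ^ n) W (iid_prob d p n)"
    using tensor_pow_unitary_diag[OF U rho, of n] unfolding W_def by auto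
  have "tensor_pow \<rho> n - complex_of_real c \<cdot>\<^sub>m 1\<^sub>m (dim_row (tensor_pow \<rho> n)) =
      unitary_diag (d ^ n) W (\<lambda>x. iid_prob d p n x - c)"
    unfolding T using unitaryD(4)[OF W] by (simp add: unitary_diag_const[OF W, symmetric] unitary_diag_minus[OF W])
  thus ?thesis unfolding T using W
    by (simp add: mat_fun_unitary_diag unitary_diag_mult mtrace_unitary_diag Re_sum o_def)
      (auto intro!: sum.cong)
qed

lemma mtrace_proj_ge_tensor_pow:
  "unitary d U \<Longrightarrow> \<rho> = unitary_diag d U p \<Longrightarrow>
   Re (mtrace (proj_ge (tensor_pow \<rho> n) c * tensor_pow \<rho> n)) =
   (\<Sum>x<d ^ n. if c \<le> iid_prob d p n x then iid_prob d p n x else 0)"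
  unfolding proj_ge_def proj_nonneg_def by (simp add: mtrace_indicator_tensor_pow)

lemma mtrace_proj_le_tensor_pow:
  "unitary d U \<Longrightarrow> \<rho> = unitary_diag d U p \<Longrightarrow>
   Re (mtrace (proj_le (tensor_pow \<rho> n) c * tensor_pow \<rho> n)) =
   (\<Sum>x<d ^ n. if iid_prob d p n x \<le> c then iid_prob d p n x else 0)"
  unfolding proj_le_def proj_nonpos_def by (simp add: mtrace_indicator_tensor_pow)

lemma sum_if_eq_diff:
  fixes f :: "'a \<Rightarrow> 'b :: ab_group_add"
  assumes "finite A"
  shows "(\<Sum>x\<in>A. if Q x then f x else 0) = sum f A - sum f {x\<in>A. \<not> Q x}"
proof -
  have "sum f A = (\<Sum>x\<in>A. if Q x then f x else 0) + (\<Sum>x\<in>A. if \<not> Q x then f x else 0)"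
    by (subst sum.distrib[symmetric]) (intro sum.cong refl, simp)
  thus ?thesis using sum.inter_filter[OF assms, of f "\<lambda>x. \<not> Q x"] by simp
qed

definition type_state :: "nat \<Rightarrow> complex mat \<Rightarrow> nat \<Rightarrow> nat \<Rightarrow> complex mat" where
  "type_state d U n x = unitary_diag d U (empirical_dist d n x)"

lemma density_op_type_state:
  "unitary d U \<Longrightarrow> d > 0 \<Longrightarrow> n > 0 \<Longrightarrow> density_op d (type_state d U n x)"
  unfolding type_state_def
  by (rule density_op_unitary_diag) (simp_all add: empirical_dist_nonneg empirical_dist_sum)

lemma rel_entropy_type_state:
  assumes U: "unitary d U" and d: "d > 0" and p: "\<forall>i<d. p i \<ge> 0" and pos: "iid_prob d p n x > 0"
  shows "rel_entropy (type_state d U n x) (unitary_diag d U p) = ereal (empirical_divergence d n p x)"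
proof -
  have "p i \<noteq> 0" if i: "i < d" and t: "empirical_dist d n x i \<noteq> 0" for i
  proof -
    have "letter_count d n x i > 0" using t by (simp add: empirical_dist_def)
    thus ?thesis using iid_prob_pos_letter_pos[OF d p pos i] by simp
  qed
  thus ?thesis unfolding type_state_def empirical_divergence_def
    by (intro rel_entropy_unitary_diag[OF U]) blast
qed

text \<open>\<open>S(\<sigma>) + D(\<sigma>\<parallel>\<rho>)\<close> is the cross entropy \<open>-\<Sum>\<^sub>i t\<^sub>i log p\<^sub>i\<close>, which is \<open>-log\<^sub>2 p\<^sup>n(x) / n\<close>.\<close>
lemma vn_entropy_add_rel_entropy_type_state:
  assumes U: "unitary d U" and d: "d > 0" and p: "\<forall>i<d. p i \<ge> 0" and pos: "iid_prob d p n x > 0"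
  shows "ereal (vn_entropy (type_state d U n x)) + rel_entropy (type_state d U n x) (unitary_diag d U p) =
    ereal (- (\<Sum>i<d. empirical_dist d n x i * log 2 (p i)))"
  unfolding rel_entropy_type_state[OF U d p pos]
  unfolding type_state_def vn_entropy_unitary_diag[OF U] empirical_divergence_def
  by (simp add: sum_subtractf[symmetric] algebra_simps flip: sum.distrib sum_negf)

lemma D_bar_le_empirical_divergence:
  assumes U: "unitary d U" and rho: "\<rho> = unitary_diag d U p" and d: "d > 0" and n: "n > 0"
    and p: "\<forall>i<d. p i \<ge> 0" and pos: "iid_prob d p n x > 0"
    and typical: "- (\<Sum>i<d. empirical_dist d n x i * log 2 (p i)) > vn_entropy \<rho> + \<gamma>"
  shows "D_bar \<rho> \<gamma> \<le> ereal (empirical_divergence d n p x)"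
proof -
  have "dim_row \<rho> = d" using rho unitaryD(4)[OF U] by simp
  hence "rel_entropy (type_state d U n x) \<rho> \<in> {rel_entropy \<sigma> \<rho> | \<sigma>. density_op (dim_row \<rho>) \<sigma> \<and>
      \<rho> * \<sigma> = \<sigma> * \<rho> \<and> ereal (vn_entropy \<sigma>) + rel_entropy \<sigma> \<rho> > ereal (vn_entropy \<rho> + \<gamma>)}"
    using density_op_type_state[OF U d n] unitary_diag_commute[OF U] typical
      vn_entropy_add_rel_entropy_type_state[OF U d p pos] rho
    by (auto simp: type_state_def)
  thus ?thesis unfolding D_bar_def rel_entropy_type_state[OF U d p pos, folded rho, symmetric]
    by (rule Inf_lower)
qed

lemma D_under_le_empirical_divergence:
  assumes U: "unitary d U" and rho: "\<rho> = unitary_diag d U p" and d: "d > 0" and n: "n > 0"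
    and p: "\<forall>i<d. p i \<ge> 0" and pos: "iid_prob d p n x > 0"
    and typical: "- (\<Sum>i<d. empirical_dist d n x i * log 2 (p i)) < vn_entropy \<rho> - \<gamma>"
  shows "D_under \<rho> \<gamma> \<le> ereal (empirical_divergence d n p x)"
proof -
  have "dim_row \<rho> = d" using rho unitaryD(4)[OF U] by simp
  hence "rel_entropy (type_state d U n x) \<rho> \<in> {rel_entropy \<sigma> \<rho> | \<sigma>. density_op (dim_row \<rho>) \<sigma> \<and>
      \<rho> * \<sigma> = \<sigma> * \<rho> \<and> ereal (vn_entropy \<sigma>) + rel_entropy \<sigma> \<rho> < ereal (vn_entropy \<rho> - \<gamma>)}"
    using density_op_type_state[OF U d n] unitary_diag_commute[OF U] typical
      vn_entropy_add_rel_entropy_type_state[OF U d p pos] rho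
    by (auto simp: type_state_def)
  thus ?thesis unfolding D_under_def rel_entropy_type_state[OF U d p pos, folded rho, symmetric]
    by (rule Inf_lower)
qed

lemma D_bar_not_MInf:
  assumes "unitary d U" "\<rho> = unitary_diag d U p" "\<forall>i<d. p i \<ge> 0" "(\<Sum>i<d. p i) = 1"
  shows "D_bar \<rho> \<gamma> \<noteq> -\<infinity>"
proof -
  have "D_bar \<rho> \<gamma> \<ge> ereal (- 2 * real d)"
    unfolding D_bar_def using rel_entropy_ge[OF assms(1,3,4)] assms(2) unitaryD(4)[OF assms(1)]
    by (intro Inf_greatest) auto
  thus ?thesis by auto
qed

lemma D_under_not_MInf:
  assumes "unitary d U" "\<rho> = unitary_diag d U p" "\<forall>i<d. p i \<ge> 0" "(\<Sum>i<d. p i) = 1"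
  shows "D_under \<rho> \<gamma> \<noteq> -\<infinity>"
proof -
  have "D_under \<rho> \<gamma> \<ge> ereal (- 2 * real d)"
    unfolding D_under_def using rel_entropy_ge[OF assms(1,3,4)] assms(2) unitaryD(4)[OF assms(1)]
    by (intro Inf_greatest) auto
  thus ?thesis by auto
qed

lemma sup_spec_entropy_tensor_pow_le:
  assumes U: "unitary d U" and rho: "\<rho> = unitary_diag d U p"
    and p: "\<forall>i<d. p i \<ge> 0" "(\<Sum>i<d. p i) = 1" and n: "n > 0"
  shows "sup_spec_entropy (eps_of d n (D_bar \<rho> \<gamma>)) (tensor_pow \<rho> n) \<le> ereal (real n * (vn_entropy \<rho> + \<gamma>))"
proof -
  have d: "d > 0" using p(2) by (cases d) auto
  define l where "l = real n * (vn_entropy \<rho> + \<gamma>)"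
  define B where "B = {x\<in>{..<d ^ n}. \<not> 2 powr (- l) \<le> iid_prob d p n x}"
  have "D_bar \<rho> \<gamma> \<le> ereal (empirical_divergence d n p x)" if x: "x \<in> B" "iid_prob d p n x > 0" for x
  proof (rule D_bar_le_empirical_divergence[OF U rho d n p(1) x(2)])
    let ?L = "\<Sum>i<d. empirical_dist d n x i * log 2 (p i)"
    have "real n * ?L < - l" using x iid_prob_eq_powr[OF d n p(1) x(2)] unfolding B_def by simp
    thus "- ?L > vn_entropy \<rho> + \<gamma>" unfolding l_def using n by (simp add: mult_less_cancel_left_pos flip: mult_minus_right)
  qed
  hence "(\<Sum>x\<in>B. iid_prob d p n x) \<le> eps_of d n (D_bar \<rho> \<gamma>)"
    by (intro iid_prob_sum_le_eps_of[OF d n p(1)] D_bar_not_MInf[OF U rho p]) (auto simp: B_def)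
  hence "Re (mtrace (proj_ge (tensor_pow \<rho> n) (2 powr (- l)) * tensor_pow \<rho> n)) \<ge> 1 - eps_of d n (D_bar \<rho> \<gamma>)"
    unfolding mtrace_proj_ge_tensor_pow[OF U rho] sum_if_eq_diff[OF finite_lessThan] iid_prob_sum p(2) B_def
    by simp
  thus ?thesis unfolding sup_spec_entropy_def l_def[symmetric] by (intro Inf_lower imageI) simp
qed

lemma inf_spec_entropy_tensor_pow_ge:
  assumes U: "unitary d U" and rho: "\<rho> = unitary_diag d U p"
    and p: "\<forall>i<d. p i \<ge> 0" "(\<Sum>i<d. p i) = 1" and n: "n > 0"
  shows "inf_spec_entropy (eps_of d n (D_under \<rho> \<gamma>)) (tensor_pow \<rho> n) \<ge> ereal (real n * (vn_entropy \<rho> - \<gamma>))"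
proof -
  have d: "d > 0" using p(2) by (cases d) auto
  define l where "l = real n * (vn_entropy \<rho> - \<gamma>)"
  define B where "B = {x\<in>{..<d ^ n}. \<not> iid_prob d p n x \<le> 2 powr (- l)}"
  have "D_under \<rho> \<gamma> \<le> ereal (empirical_divergence d n p x)" if x: "x \<in> B" "iid_prob d p n x > 0" for x
  proof (rule D_under_le_empirical_divergence[OF U rho d n p(1) x(2)])
    let ?L = "\<Sum>i<d. empirical_dist d n x i * log 2 (p i)"
    have "real n * ?L > - l" using x iid_prob_eq_powr[OF d n p(1) x(2)] unfolding B_def by simp
    thus "- ?L < vn_entropy \<rho> - \<gamma>" unfolding l_def using n by (simp add: mult_less_cancel_left_pos flip: mult_minus_right)
  qed
  hence "(\<Sum>x\<in>B. iid_prob d p n x) \<le> eps_of d n (D_under \<rho> \<gamma>)"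
    by (intro iid_prob_sum_le_eps_of[OF d n p(1)] D_under_not_MInf[OF U rho p]) (auto simp: B_def)
  hence "Re (mtrace (proj_le (tensor_pow \<rho> n) (2 powr (- l)) * tensor_pow \<rho> n)) \<ge> 1 - eps_of d n (D_under \<rho> \<gamma>)"
    unfolding mtrace_proj_le_tensor_pow[OF U rho] sum_if_eq_diff[OF finite_lessThan] iid_prob_sum p(2) B_def
    by simp
  thus ?thesis unfolding inf_spec_entropy_def l_def[symmetric] by (intro Sup_upper imageI) simp
qed

theorem proposition2:
  fixes d n :: nat and \<rho> :: "complex mat" and \<gamma> :: real
  assumes "density_op d \<rho>" and "\<gamma> > 0" and "n > 0"
  shows "sup_spec_entropy (eps_of d n (D_bar \<rho> \<gamma>)) (tensor_pow \<rho> n)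
           \<le> ereal (real n * (vn_entropy \<rho> + \<gamma>)) \<and>
         inf_spec_entropy (eps_of d n (D_under \<rho> \<gamma>)) (tensor_pow \<rho> n)
           \<ge> ereal (real n * (vn_entropy \<rho> - \<gamma>))"
proof -
  obtain U p where "unitary d U" "\<rho> = unitary_diag d U p" "\<forall>i<d. p i \<ge> 0" "(\<Sum>i<d. p i) = 1"
    using density_op_spectral[OF assms(1)] .
  thus ?thesis
    using sup_spec_entropy_tensor_pow_le inf_spec_entropy_tensor_pow_ge assms(3) by blast
qed

end
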